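(* Let $C\subseteq V(K_n\times K_m)$ satisfy: (1) there exist $1\le n_1<n_2<n_3\le n$ and $1\le m_1<m_2<m_3\le m$ with $(n_1,m_1),(n_2,m_2),(n_3,m_3)\in C$; (2) every $v\in C$ is row-isolated or column-isolated in $C$; (3) $rs(C)=m$ and $cs(C)=n$; (4) at most one vertex of $C$ is isolated in $C$. Then $C$ is an identifying code of $K_n\times K_m$.
   Context: $K_n\times K_m$ is the direct product of complete graphs: vertex set $[n]\times[m]$, with $(i,r)$ adjacent to $(j,s)$ iff $i\ne j$ and $r \ne s$. An identifying code is a dominating set $C$ with $N[x]\cap C\ne N[y]\cap C$ for all distinct vertices $x,y$ ($N[x]$ the closed neighborhood). Columns: $C_i=\{(i,t):t\in[m]\}$; rows: $R_r=\{(k,r):k\in[n]\}$. $cs(C)$ (resp. $rs(C)$) is the number of columns (resp. rows) meeting $C$. A vertex $v=(i,r)$ is column-isolated in $C$ if $C\cap C_i=\{v\}$, row-isolated in $C$ if $C\cap R_r=\{v\}$, and isolated in $C$ if both. *)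

theory Defs
  imports Main
begin

definition verts :: "nat \<Rightarrow> nat \<Rightarrow> (nat \<times> nat) set" where
  "verts n m = {1..n} \<times> {1..m}"

definition adj :: "nat \<times> nat \<Rightarrow> nat \<times> nat \<Rightarrow> bool" where
  "adj x y \<longleftrightarrow> fst x \<noteq> fst y \<and> snd x \<noteq> snd y"

definition closed_nbhd :: "nat \<Rightarrow> nat \<Rightarrow> nat \<times> nat \<Rightarrow> (nat \<times> nat) set" where
  "closed_nbhd n m x = {y \<in> verts n m. adj x y} \<union> {x}"

definition dominating :: "nat \<Rightarrow> nat \<Rightarrow> (nat \<times> nat) set \<Rightarrow> bool" where
  "dominating n m C \<longleftrightarrow> C \<subseteq> verts n m \<and> (\<forall>x\<in>verts n m. closed_nbhd n m x \<inter> C \<noteq> {})"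

definition identifying_code :: "nat \<Rightarrow> nat \<Rightarrow> (nat \<times> nat) set \<Rightarrow> bool" where
  "identifying_code n m C \<longleftrightarrow> dominating n m C \<and>
     (\<forall>x\<in>verts n m. \<forall>y\<in>verts n m. x \<noteq> y \<longrightarrow> closed_nbhd n m x \<inter> C \<noteq> closed_nbhd n m y \<inter> C)"

definition column :: "nat \<Rightarrow> nat \<Rightarrow> (nat \<times> nat) set" where
  "column m i = {(i, t) | t. t \<in> {1..m}}"

definition row :: "nat \<Rightarrow> nat \<Rightarrow> (nat \<times> nat) set" where
  "row n r = {(k, r) | k. k \<in> {1..n}}"

definition cs :: "nat \<Rightarrow> nat \<Rightarrow> (nat \<times> nat) set \<Rightarrow> nat" where
  "cs n m C = card {i \<in> {1..n}. column m i \<inter> C \<noteq> {}}"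

definition rs :: "nat \<Rightarrow> nat \<Rightarrow> (nat \<times> nat) set \<Rightarrow> nat" where
  "rs n m C = card {r \<in> {1..m}. row n r \<inter> C \<noteq> {}}"

definition col_isolated :: "nat \<Rightarrow> (nat \<times> nat) set \<Rightarrow> nat \<times> nat \<Rightarrow> bool" where
  "col_isolated m C v \<longleftrightarrow> C \<inter> column m (fst v) = {v}"

definition row_isolated :: "nat \<Rightarrow> (nat \<times> nat) set \<Rightarrow> nat \<times> nat \<Rightarrow> bool" where
  "row_isolated n C v \<longleftrightarrow> C \<inter> row n (snd v) = {v}"

definition isolated :: "nat \<Rightarrow> nat \<Rightarrow> (nat \<times> nat) set \<Rightarrow> nat \<times> nat \<Rightarrow> bool" where
  "isolated n m C v \<longleftrightarrow> row_isolated n C v \<and> col_isolated m C v"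

end

theory Submission imports Defs begin

(*
  Since C lies inside the vertex set, the part of the closed
  neighbourhood of x seen by C is its trace  {z in C. z adjacent to x or z = x}.
  Domination: three code vertices with pairwise distinct rows and columns
  dominate everything, because a vertex x shares its row with at most one of
  them and its column with at most one of them.
  Separation: assume x = (i,r) and y = (j,s) are distinct with equal traces.
  A code vertex in the row or column of x lies in the trace of x only if it is
  x itself.  Since every row and every column meets C, this rules out i = j and
  r = s, and for i ~= j, r ~= s it confines C on the lines through x and y to
  the four corners of the rectangle spanned by x and y.  A purely combinatorial
  lemma then shows that such a rectangle cannot carry a code in which every
  vertex is alone in its row or in its column and at most one vertex is alone
  in both.
*)

definition alone_in_row :: "('a \<times> 'b) set \<Rightarrow> 'a \<times> 'b \<Rightarrow> bool" where
  "alone_in_row C v \<longleftrightarrow> (\<forall>w\<in>C. snd w = snd v \<longrightarrow> w = v)"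

definition alone_in_col :: "('a \<times> 'b) set \<Rightarrow> 'a \<times> 'b \<Rightarrow> bool" where
  "alone_in_col C v \<longleftrightarrow> (\<forall>w\<in>C. fst w = fst v \<longrightarrow> w = v)"

lemma row_isolated_iff_alone:
  assumes "C \<subseteq> verts n m" "v \<in> C"
  shows "row_isolated n C v \<longleftrightarrow> alone_in_row C v"
proof -
  have "C \<inter> row n (snd v) = {w \<in> C. snd w = snd v}"
    using assms(1) unfolding row_def verts_def by fastforce
  then show ?thesis
    using assms(2) unfolding row_isolated_def alone_in_row_def by blast
qed

lemma col_isolated_iff_alone:
  assumes "C \<subseteq> verts n m" "v \<in> C"
  shows "col_isolated m C v \<longleftrightarrow> alone_in_col C v"
proof -
  have "C \<inter> column m (fst v) = {w \<in> C. fst w = fst v}"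
    using assms(1) unfolding column_def verts_def by fastforce
  then show ?thesis
    using assms(2) unfolding col_isolated_def alone_in_col_def by blast
qed

lemma isolated_unique:
  assumes sub: "C \<subseteq> verts n m" and at_most_one: "card {v \<in> C. isolated n m C v} \<le> 1"
    and "v \<in> C" "w \<in> C" "alone_in_row C v" "alone_in_col C v" "alone_in_row C w" "alone_in_col C w"
  shows "v = w"
proof -
  have "finite {v \<in> C. isolated n m C v}"
    using sub finite_subset unfolding verts_def by fastforce
  moreover have "v \<in> {v \<in> C. isolated n m C v}" "w \<in> {v \<in> C. isolated n m C v}"
    using assms(3-) row_isolated_iff_alone[OF sub] col_isolated_iff_alone[OF sub]
    unfolding isolated_def by auto
  ultimately show "v = w" using at_most_one[unfolded One_nat_def] card_le_Suc0_iff_eq by blast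
qed

lemma rectangle_corners_impossible:
  fixes C :: "('a \<times> 'b) set"
  assumes ij: "i \<noteq> j" and rs: "r \<noteq> s"
    and corners: "\<And>z. z \<in> C \<Longrightarrow> fst z \<in> {i, j} \<or> snd z \<in> {r, s} \<Longrightarrow> z \<in> {i, j} \<times> {r, s}"
    and cols_met: "\<exists>t. (i, t) \<in> C" "\<exists>t. (j, t) \<in> C"
    and rows_met: "\<exists>k. (k, r) \<in> C" "\<exists>k. (k, s) \<in> C"
    and alone: "\<And>v. v \<in> C \<Longrightarrow> alone_in_row C v \<or> alone_in_col C v"
    and one_isolated: "\<And>v w. v \<in> C \<Longrightarrow> w \<in> C \<Longrightarrow> alone_in_row C v \<Longrightarrow> alone_in_col C v
                        \<Longrightarrow> alone_in_row C w \<Longrightarrow> alone_in_col C w \<Longrightarrow> v = w"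
  shows False
proof -
  have col_met: "(k, r) \<in> C \<or> (k, s) \<in> C" if k: "k \<in> {i, j}" for k
  proof -
    obtain t where "(k, t) \<in> C" using cols_met k by blast
    moreover from corners[OF this] k have "t \<in> {r, s}" by auto
    ultimately show ?thesis by blast
  qed
  have row_met: "(i, t) \<in> C \<or> (j, t) \<in> C" if t: "t \<in> {r, s}" for t
  proof -
    obtain k where "(k, t) \<in> C" using rows_met t by blast
    moreover from corners[OF this] t have "k \<in> {i, j}" by auto
    ultimately show ?thesis by blast
  qed
  text \<open>Two corners in a common column are not alone in it, hence alone in their
    rows, which empties the other column; symmetrically for rows.\<close>
  have not_both_col: "(k, r) \<notin> C \<or> (k, s) \<notin> C" if k: "k \<in> {i, j}" for k
  proof (rule ccontr)
    assume "\<not> ?thesis"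
    then have both: "(k, r) \<in> C" "(k, s) \<in> C" by auto
    then have "\<not> alone_in_col C (k, r)" "\<not> alone_in_col C (k, s)"
      using rs unfolding alone_in_col_def by force+
    then have "alone_in_row C (k, r)" "alone_in_row C (k, s)"
      using alone both by blast+
    then have "(k', r) \<notin> C" "(k', s) \<notin> C" if "k' \<noteq> k" for k'
      using that unfolding alone_in_row_def by auto
    moreover obtain k' where "k' \<in> {i, j}" "k' \<noteq> k" using k ij by blast
    ultimately show False using col_met[of k'] by blast
  qed
  have not_both_row: "(i, t) \<notin> C \<or> (j, t) \<notin> C" if t: "t \<in> {r, s}" for t
  proof (rule ccontr)
    assume "\<not> ?thesis"
    then have both: "(i, t) \<in> C" "(j, t) \<in> C" by auto
    then have "\<not> alone_in_row C (i, t)" "\<not> alone_in_row C (j, t)"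
      using ij unfolding alone_in_row_def by force+
    then have "alone_in_col C (i, t)" "alone_in_col C (j, t)"
      using alone both by blast+
    then have "(i, t') \<notin> C" "(j, t') \<notin> C" if "t' \<noteq> t" for t'
      using that unfolding alone_in_col_def by auto
    moreover obtain t' where "t' \<in> {r, s}" "t' \<noteq> t" using t rs by blast
    ultimately show False using row_met[of t'] by blast
  qed
  have isolated_corner: "alone_in_row C v \<and> alone_in_col C v"
    if v: "v \<in> C" "v \<in> {i, j} \<times> {r, s}"
      and no_mate: "\<And>w. w \<in> C \<Longrightarrow> w \<in> {i, j} \<times> {r, s} \<Longrightarrow> fst w = fst v \<or> snd w = snd v \<Longrightarrow> w = v"
    for v
  proof -
    have "w = v" if w: "w \<in> C" "fst w = fst v \<or> snd w = snd v" for w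
    proof -
      have "fst w \<in> {i, j} \<or> snd w \<in> {r, s}" using w(2) v(2) by auto
      then show ?thesis using corners no_mate w by blast
    qed
    then show ?thesis unfolding alone_in_row_def alone_in_col_def by blast
  qed
  text \<open>Hence C meets the corners in a diagonal, both of whose vertices are isolated.\<close>
  consider "(i, r) \<in> C" "(j, s) \<in> C" "(i, s) \<notin> C" "(j, r) \<notin> C"
    | "(i, s) \<in> C" "(j, r) \<in> C" "(i, r) \<notin> C" "(j, s) \<notin> C"
    using col_met row_met not_both_col not_both_row by blast
  then show False
  proof cases
    case 1
    have "alone_in_row C (i, r) \<and> alone_in_col C (i, r)"
      by (rule isolated_corner) (use 1 ij rs in auto)
    moreover have "alone_in_row C (j, s) \<and> alone_in_col C (j, s)"
      by (rule isolated_corner) (use 1 ij rs in auto)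
    ultimately show False using one_isolated[of "(i, r)" "(j, s)"] 1 ij by blast
  next
    case 2
    have "alone_in_row C (i, s) \<and> alone_in_col C (i, s)"
      by (rule isolated_corner) (use 2 ij rs in auto)
    moreover have "alone_in_row C (j, r) \<and> alone_in_col C (j, r)"
      by (rule isolated_corner) (use 2 ij rs in auto)
    ultimately show False using one_isolated[of "(i, s)" "(j, r)"] 2 ij by blast
  qed
qed

definition trace :: "(nat \<times> nat) set \<Rightarrow> nat \<times> nat \<Rightarrow> (nat \<times> nat) set" where
  "trace C x = {z \<in> C. adj x z \<or> z = x}"

lemma closed_nbhd_inter_eq_trace:
  assumes "C \<subseteq> verts n m"
  shows "closed_nbhd n m x \<inter> C = trace C x"
  using assms unfolding closed_nbhd_def trace_def by auto

lemma trace_on_lines: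
  assumes "z \<in> C" "fst z = fst x \<or> snd z = snd x"
  shows "z \<in> trace C x \<longleftrightarrow> z = x"
  using assms unfolding trace_def adj_def by auto

lemma equal_traces_imp_equal:
  fixes C :: "(nat \<times> nat) set"
  assumes cols_met: "\<exists>t. (fst x, t) \<in> C" "\<exists>t. (fst y, t) \<in> C"
    and rows_met: "\<exists>k. (k, snd x) \<in> C" "\<exists>k. (k, snd y) \<in> C"
    and alone: "\<And>v. v \<in> C \<Longrightarrow> alone_in_row C v \<or> alone_in_col C v"
    and one_isolated: "\<And>v w. v \<in> C \<Longrightarrow> w \<in> C \<Longrightarrow> alone_in_row C v \<Longrightarrow> alone_in_col C v
                        \<Longrightarrow> alone_in_row C w \<Longrightarrow> alone_in_col C w \<Longrightarrow> v = w"
    and same_trace: "trace C x = trace C y"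
  shows "x = y"
proof (rule ccontr)
  assume xy: "x \<noteq> y"
  text \<open>A code vertex on a line through x or y lies in both traces or in neither,
    which by the previous lemma pins it down.\<close>
  have on_lines: "z = x \<longleftrightarrow> z = y \<or> adj y z" if "z \<in> C" "fst z = fst x \<or> snd z = snd x" for z
    using trace_on_lines[OF that] same_trace that(1) unfolding trace_def by blast
  have on_lines': "z = y \<longleftrightarrow> z = x \<or> adj x z" if "z \<in> C" "fst z = fst y \<or> snd z = snd y" for z
    using trace_on_lines[OF that] same_trace that(1) unfolding trace_def by blast
  have col: "fst x \<noteq> fst y"
  proof
    assume "fst x = fst y"
    moreover obtain k where "(k, snd x) \<in> C" using rows_met by blast
    ultimately show False using on_lines[of "(k, snd x)"] xy unfolding adj_def
      by (cases x, cases y) auto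
  qed
  have row: "snd x \<noteq> snd y"
  proof
    assume "snd x = snd y"
    moreover obtain t where "(fst x, t) \<in> C" using cols_met by blast
    ultimately show False using on_lines[of "(fst x, t)"] xy unfolding adj_def
      by (cases x, cases y) auto
  qed
  show False
  proof (rule rectangle_corners_impossible[OF col row _ cols_met rows_met alone one_isolated])
    fix z assume "z \<in> C" "fst z \<in> {fst x, fst y} \<or> snd z \<in> {snd x, snd y}"
    then show "z \<in> {fst x, fst y} \<times> {snd x, snd y}"
      using on_lines[of z] on_lines'[of z] col row unfolding adj_def
      by (cases z, cases x, cases y) auto
  qed auto
qed

lemma diagonal_triple_dominates:
  assumes "a \<in> C" "b \<in> C" "c \<in> C"
    and "fst a \<noteq> fst b" "fst a \<noteq> fst c" "fst b \<noteq> fst c"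
    and "snd a \<noteq> snd b" "snd a \<noteq> snd c" "snd b \<noteq> snd c"
  shows "\<exists>z\<in>C. adj x z"
  using assms unfolding adj_def by metis

lemma full_rs_meets_rows:
  assumes "rs n m C = m" "r \<in> {1..m}"
  shows "\<exists>k. (k, r) \<in> C"
proof -
  have "{r \<in> {1..m}. row n r \<inter> C \<noteq> {}} = {1..m}"
    by (rule card_subset_eq) (use assms(1) in \<open>auto simp: rs_def\<close>)
  then show ?thesis using assms(2) unfolding row_def by blast
qed

lemma full_cs_meets_cols:
  assumes "cs n m C = n" "i \<in> {1..n}"
  shows "\<exists>t. (i, t) \<in> C"
proof -
  have "{i \<in> {1..n}. column m i \<inter> C \<noteq> {}} = {1..n}"
    by (rule card_subset_eq) (use assms(1) in \<open>auto simp: cs_def\<close>)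
  then show ?thesis using assms(2) unfolding column_def by blast
qed

theorem mainTheorem12:
  fixes n m :: nat and C :: "(nat \<times> nat) set"
  assumes sub: "C \<subseteq> verts n m"
    and h1: "\<exists>n1 n2 n3 m1 m2 m3. 1 \<le> n1 \<and> n1 < n2 \<and> n2 < n3 \<and> n3 \<le> n \<and>
               1 \<le> m1 \<and> m1 < m2 \<and> m2 < m3 \<and> m3 \<le> m \<and>
               (n1, m1) \<in> C \<and> (n2, m2) \<in> C \<and> (n3, m3) \<in> C"
    and h2: "\<forall>v\<in>C. row_isolated n C v \<or> col_isolated m C v"
    and h3: "rs n m C = m" "cs n m C = n"
    and h4: "card {v \<in> C. isolated n m C v} \<le> 1"
  shows "identifying_code n m C"
proof -
  have alone: "\<And>v. v \<in> C \<Longrightarrow> alone_in_row C v \<or> alone_in_col C v"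
    using h2 row_isolated_iff_alone[OF sub] col_isolated_iff_alone[OF sub] by blast
  obtain n1 n2 n3 m1 m2 m3 where diagonal: "n1 < n2" "n2 < n3" "m1 < m2" "m2 < m3"
    "(n1, m1) \<in> C" "(n2, m2) \<in> C" "(n3, m3) \<in> C"
    using h1 by blast
  have dom: "closed_nbhd n m x \<inter> C \<noteq> {}" for x
  proof -
    obtain z where "z \<in> C" "adj x z"
      using diagonal_triple_dominates[of "(n1, m1)" C "(n2, m2)" "(n3, m3)" x] diagonal by auto
    then show ?thesis unfolding closed_nbhd_inter_eq_trace[OF sub] trace_def by blast
  qed
  have sep: "x = y" if "x \<in> verts n m" "y \<in> verts n m"
    "closed_nbhd n m x \<inter> C = closed_nbhd n m y \<inter> C" for x y
    using that full_rs_meets_rows[OF h3(1)] full_cs_meets_cols[OF h3(2)]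
    by (intro equal_traces_imp_equal[OF _ _ _ _ alone isolated_unique[OF sub h4]])
       (auto simp: verts_def closed_nbhd_inter_eq_trace[OF sub])
  show ?thesis
    unfolding identifying_code_def dominating_def using sub dom sep by blast
qed

end
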